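(* Let $\alpha=1-e^{-\lambda\xi T}$ and let $U,B>0$ be constants such that for every measurable $f:\mathbb{R}\times[0,T]\to[0,\infty)$ with $|f(z,t)-f(\tilde z,t)|\le|z-\tilde z|$ for all $z,\tilde z\in\mathbb{R}$, $t\in[0,T]$, one has $\sup_{t\in[0,T]}Jf(0,t)\le U+\alpha\big(\sup_{t\in[0,T]}f(0,t)+B/\xi\big)$. Let $M_n:=\sup_{t\in[0,T]}v_n(0,t)$ for $n\ge0$. Then for all $n\ge 0$, $$M_n<M_\infty:=\frac{U}{1-\alpha}+\frac{\alpha}{1-\alpha}\frac{B}{\xi}+K_1<\infty.$$
   Context: Fix constants $r>0$, $\sigma>0$, $\lambda>0$, $T>0$, $K_1\ge 0$ and $\zeta\in\{-1,1\}$. Let $\nu$ be a probability measure on $(0,\infty)$ with $\xi:=\int_{(0,\infty)}y\,\nu(dy)<\infty$, and set $\mu:=\lambda(\xi-1)$. For $t\in[0,T]$ let $q_t:=\frac{1}{rT}(1-e^{-r(T-t)})$. On a probability space with probability measure $\mathbb{Q}$ carrying a standard Brownian motion $W$, for $t\in[0,T]$ and $z\in\mathbb{R}$ let $Z^{t,z}=(Z^{t,z}_s)_{0\le s\le T-t}$ be the solution of $dZ^{t,z}_s=-\mu(q_{t+s}-Z^{t,z}_s)\,ds+\sigma(q_{t+s}-Z^{t,z}_s)\,dW_s$, $Z^{t,z}_0=z$. For measurable $f:\mathbb{R}\times[0,T]\to[0,\infty)$ define $$Pf(z,t):=\int_{(0,\infty)} f\Big(\frac{z}{y}+q_t\frac{y-1}{y},t\Big)\,y\,\nu(dy),$$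 $$Jf(z,t):=\mathbb{E}^{\mathbb{Q}}\Big\{e^{-\lambda\xi(T-t)}\big(\zeta(Z^{t,z}_{T-t}-K_1)\big)^++\int_0^{T-t}e^{-\lambda\xi s}\lambda\, Pf(Z^{t,z}_s,t+s)\,ds\Big\}.$$ Define $v_0(z,t):=(\zeta(z-K_1))^+$ and $v_{n+1}:=Jv_n$ for $n\ge0$. (Such constants $U,B$ exist; the paper establishes this.) *)

theory Defs
  imports "HOL-Probability.Probability"
begin

definition std_BM :: "'a measure \<Rightarrow> (real \<Rightarrow> 'a \<Rightarrow> real) \<Rightarrow> bool" where
  "std_BM M W \<longleftrightarrow> prob_space M
     \<and> (\<forall>t. W t \<in> borel_measurable M)
     \<and> (\<forall>\<omega>\<in>space M. W 0 \<omega> = 0 \<and> continuous_on {0..} (\<lambda>t. W t \<omega>))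
     \<and> (\<forall>s t. 0 \<le> s \<longrightarrow> s < t \<longrightarrow>
          distributed M lborel (\<lambda>\<omega>. W t \<omega> - W s \<omega>)
            (\<lambda>x. ennreal (normal_density 0 (sqrt (t - s)) x)))
     \<and> (\<forall>ts :: real list. sorted_wrt (<) ts \<longrightarrow> (\<forall>u\<in>set ts. 0 \<le> u) \<longrightarrow>
          prob_space.indep_vars M (\<lambda>_. borel)
            (\<lambda>i \<omega>. W (ts ! Suc i) \<omega> - W (ts ! i) \<omega>) {..<length ts - 1})"

definition qf :: "real \<Rightarrow> real \<Rightarrow> real \<Rightarrow> real" where
  "qf r T t = (1 - exp (- r * (T - t))) / (r * T)"

definition dqf :: "real \<Rightarrow> real \<Rightarrow> real \<Rightarrow> real" where
  "dqf r T t = - exp (- r * (T - t)) / T"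

definition xi :: "real measure \<Rightarrow> real" where
  "xi \<nu> = (\<integral>y. y \<partial>\<nu>)"

definition muc :: "real \<Rightarrow> real measure \<Rightarrow> real" where
  "muc lam \<nu> = lam * (xi \<nu> - 1)"

text \<open>The (pathwise, strong) solution Z^{t,z}_s of the linear SDE
  dZ_s = -mu (q_{t+s} - Z_s) ds + sigma (q_{t+s} - Z_s) dW_s, Z_0 = z,
  written explicitly: with Phi_s = exp((mu - sigma^2/2) s - sigma W_s),
  Z_s = q_{t+s} - Phi_s (q_t - z + int_0^s q'(t+u) / Phi_u du).\<close>
definition Phi :: "real \<Rightarrow> real \<Rightarrow> (real \<Rightarrow> 'a \<Rightarrow> real) \<Rightarrow> real \<Rightarrow> 'a \<Rightarrow> real" where
  "Phi m \<sigma> W s \<omega> = exp ((m - \<sigma>\<^sup>2 / 2) * s - \<sigma> * W s \<omega>)"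

definition Zsol :: "real \<Rightarrow> real \<Rightarrow> real \<Rightarrow> real \<Rightarrow> real measure \<Rightarrow> (real \<Rightarrow> 'a \<Rightarrow> real)
    \<Rightarrow> real \<Rightarrow> real \<Rightarrow> real \<Rightarrow> 'a \<Rightarrow> real" where
  "Zsol r \<sigma> lam T \<nu> W t z s \<omega> =
     qf r T (t + s) - Phi (muc lam \<nu>) \<sigma> W s \<omega> *
       (qf r T t - z + (LINT u:{0..s}|lborel. dqf r T (t + u) / Phi (muc lam \<nu>) \<sigma> W u \<omega>))"

definition Pop :: "real \<Rightarrow> real \<Rightarrow> real measure \<Rightarrow> (real \<Rightarrow> real \<Rightarrow> real) \<Rightarrow> real \<Rightarrow> real \<Rightarrow> real" where
  "Pop r T \<nu> f z t = (\<integral>y. f (z / y + qf r T t * (y - 1) / y) t * y \<partial>\<nu>)"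

definition Jop :: "real \<Rightarrow> real \<Rightarrow> real \<Rightarrow> real \<Rightarrow> real \<Rightarrow> real \<Rightarrow> real measure \<Rightarrow> 'a measure
    \<Rightarrow> (real \<Rightarrow> 'a \<Rightarrow> real) \<Rightarrow> (real \<Rightarrow> real \<Rightarrow> real) \<Rightarrow> real \<Rightarrow> real \<Rightarrow> real" where
  "Jop r \<sigma> lam T K1 \<zeta> \<nu> M W f z t =
     (\<integral>\<omega>. exp (- lam * xi \<nu> * (T - t)) * max 0 (\<zeta> * (Zsol r \<sigma> lam T \<nu> W t z (T - t) \<omega> - K1))
        + (LINT s:{0..T - t}|lborel.
             exp (- lam * xi \<nu> * s) * lam * Pop r T \<nu> f (Zsol r \<sigma> lam T \<nu> W t z s \<omega>) (t + s)) \<partial>M)"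

definition vseq :: "real \<Rightarrow> real \<Rightarrow> real \<Rightarrow> real \<Rightarrow> real \<Rightarrow> real \<Rightarrow> real measure \<Rightarrow> 'a measure
    \<Rightarrow> (real \<Rightarrow> 'a \<Rightarrow> real) \<Rightarrow> nat \<Rightarrow> real \<Rightarrow> real \<Rightarrow> real" where
  "vseq r \<sigma> lam T K1 \<zeta> \<nu> M W n =
     (Jop r \<sigma> lam T K1 \<zeta> \<nu> M W ^^ n) (\<lambda>z t. max 0 (\<zeta> * (z - K1)))"

end

theory Submission
  imports Defs
begin

text \<open>
  J maps nonnegative measurable functions that are 1-Lipschitz in z to functions of the same kind.
  Indeed Z^{t,z}_s - Z^{t,z'}_s = \<Phi>_s (z - z') with \<Phi> > 0; P is 1-Lipschitz because the jump map
  z \<mapsto> z/y + q_t (y-1)/y contracts by 1/y while the weight is y; and E \<Phi>_s = e^{\<mu>s} with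
  \<lambda>\<xi> - \<mu> = \<lambda>, so the Lipschitz constant E[e^{-\<lambda>\<xi>(T-t)} \<Phi>_{T-t} + \<integral>[0,T-t] \<lambda> e^{-\<lambda>\<xi>s} \<Phi>_s ds]
  of J equals e^{-\<lambda>(T-t)} + (1 - e^{-\<lambda>(T-t)}) = 1.
  Hence the hypothesis applies to every v_n and gives M_{n+1} \<le> U + \<alpha>(M_n + B/\<xi>). This affine
  map has fixed point M_\<infinity> - K_1, and M_0 \<le> K_1, so by induction every M_n stays below M_\<infinity>.
\<close>

lemma integral_param_lipschitz:
  fixes h :: "real \<Rightarrow> 'm \<Rightarrow> real" and G :: "'m \<Rightarrow> real"
  assumes meas: "\<And>z. h z \<in> borel_measurable N"
    and G: "integrable N G"
    and lip: "\<And>z z'. AE x in N. \<bar>h z x - h z' x\<bar> \<le> G x * \<bar>z - z'\<bar>"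
  shows "\<bar>integral\<^sup>L N (h z) - integral\<^sup>L N (h z')\<bar> \<le> integral\<^sup>L N G * \<bar>z - z'\<bar>"
proof -
  have G_nonneg: "AE x in N. 0 \<le> G x"
    using lip[of 0 1] by eventually_elim (auto intro: order_trans)
  have integrable_transfer: "integrable N (h b)" if "integrable N (h a)" for a b
  proof (rule Bochner_Integration.integrable_bound)
    show "integrable N (\<lambda>x. \<bar>h a x\<bar> + G x * \<bar>b - a\<bar>)"
      using that G by auto
    show "AE x in N. norm (h b x) \<le> norm (\<bar>h a x\<bar> + G x * \<bar>b - a\<bar>)"
      using lip[of b a] G_nonneg by eventually_elim auto
  qed (rule meas)
  show ?thesis
  proof (cases "integrable N (h z)")
    case True
    then have z': "integrable N (h z')" by (rule integrable_transfer)
    have "\<bar>integral\<^sup>L N (h z) - integral\<^sup>L N (h z')\<bar> = \<bar>\<integral>x. h z x - h z' x \<partial>N\<bar>"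
      using True z' by simp
    also have "\<dots> \<le> (\<integral>x. \<bar>h z x - h z' x\<bar> \<partial>N)"
      by (rule integral_abs_bound)
    also have "\<dots> \<le> (\<integral>x. G x * \<bar>z - z'\<bar> \<partial>N)"
      using True z' G lip[of z z'] by (intro integral_mono_AE) auto
    finally show ?thesis by simp
  next
    case False
    then have "\<not> integrable N (h z')" using integrable_transfer by blast
    then show ?thesis using False integral_nonneg_AE[OF G_nonneg]
      by (simp add: not_integrable_integral_eq)
  qed
qed

lemma nn_integral_normal_density_exp:
  assumes "v > 0"
  shows "(\<integral>\<^sup>+x. ennreal (normal_density 0 v x) * ennreal (exp (a * x)) \<partial>lborel)
    = ennreal (exp (a\<^sup>2 * v\<^sup>2 / 2))"
proof -
  have shift: "normal_density 0 v x * exp (a * x) = exp (a\<^sup>2 * v\<^sup>2 / 2) * normal_density (a * v\<^sup>2) v x"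
    for x
  proof -
    have "-(x - 0)\<^sup>2 / (2 * v\<^sup>2) + a * x = a\<^sup>2 * v\<^sup>2 / 2 + (-(x - a * v\<^sup>2)\<^sup>2 / (2 * v\<^sup>2))"
      using assms by (simp add: field_simps power2_eq_square)
    then show ?thesis unfolding normal_density_def
      by (simp add: exp_add[symmetric] mult_ac)
  qed
  have "(\<integral>\<^sup>+x. ennreal (normal_density 0 v x) * ennreal (exp (a * x)) \<partial>lborel)
      = ennreal (exp (a\<^sup>2 * v\<^sup>2 / 2)) * (\<integral>\<^sup>+x. ennreal (normal_density (a * v\<^sup>2) v x) \<partial>lborel)"
    by (subst nn_integral_cmult[symmetric]) (auto simp: ennreal_mult[symmetric] shift intro!: nn_integral_cong)
  also have "(\<integral>\<^sup>+x. ennreal (normal_density (a * v\<^sup>2) v x) \<partial>lborel) = 1"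
    using assms by (subst nn_integral_eq_integral)
      (auto simp: integral_normal_density integrable_normal_density)
  finally show ?thesis by simp
qed

lemma nn_integral_exponential_density_atLeastAtMost:
  fixes c a :: real
  assumes "0 \<le> c" "0 \<le> a"
  shows "(\<integral>\<^sup>+s. ennreal (indicator {0..a} s * (c * exp (- c * s))) \<partial>lborel) = ennreal (1 - exp (- c * a))"
proof -
  have "((\<lambda>s. c * exp (- c * s)) has_integral ((- exp (- c * a)) - (- exp (- c * 0)))) {0..a}"
  proof (rule fundamental_theorem_of_calculus[OF assms(2)])
    fix x :: real
    show "((\<lambda>s. - exp (- c * s)) has_vector_derivative c * exp (- c * x)) (at x within {0..a})"
      unfolding has_real_derivative_iff_has_vector_derivative[symmetric]
      by (auto intro!: derivative_eq_intros)
  qed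
  then have "((\<lambda>s. c * exp (- c * s)) has_integral (1 - exp (- c * a))) {0..a}" by simp
  from nn_integral_has_integral_lebesgue[OF _ this] assms show ?thesis by simp
qed

lemma borel_measurable_set_integral_atLeastAtMost:
  fixes f :: "'a \<Rightarrow> real \<Rightarrow> real"
  assumes f[measurable]: "(\<lambda>p. f (fst p) (snd p)) \<in> borel_measurable (N \<Otimes>\<^sub>M borel)"
    and b[measurable]: "b \<in> borel_measurable N"
  shows "(\<lambda>q. LINT s:{0..b q}|lborel. f q s) \<in> borel_measurable N"
proof -
  have "(\<lambda>p. (if 0 \<le> snd p \<and> snd p \<le> b (fst p) then 1 else 0) * f (fst p) (snd p))
      \<in> borel_measurable (N \<Otimes>\<^sub>M lborel)"
    by (subst measurable_cong_sets[OF sets_pair_measure_cong[OF refl sets_lborel] refl]) measurable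
  then have "(\<lambda>q. \<integral>s. (if 0 \<le> s \<and> s \<le> b q then 1 else 0) * f q s \<partial>lborel) \<in> borel_measurable N"
    by (intro lborel.borel_measurable_lebesgue_integral) (simp add: split_beta')
  then show ?thesis
    by (simp add: set_lebesgue_integral_def indicator_def if_distrib cong: if_cong)
qed

lemma borel_measurable_case_prod_compose:
  fixes g :: "real \<Rightarrow> real \<Rightarrow> real"
  assumes "case_prod g \<in> borel_measurable borel"
    and "a \<in> borel_measurable N" "b \<in> borel_measurable N"
  shows "(\<lambda>x. g (a x) (b x)) \<in> borel_measurable N"
  using measurable_compose[OF measurable_Pair[OF assms(2,3)], of "case_prod g" borel] assms(1)
  by (simp add: borel_prod)

lemma LIMSEQ_ceiling_grid: "(\<lambda>n. real_of_int \<lceil>real (Suc n) * s\<rceil> / real (Suc n)) \<longlonglongrightarrow> s"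
proof (rule tendsto_sandwich[of "\<lambda>_. s" _ sequentially "\<lambda>n. s + 1 / real (Suc n)"])
  show "\<forall>\<^sub>F n in sequentially. s \<le> real_of_int \<lceil>real (Suc n) * s\<rceil> / real (Suc n)"
  proof (intro always_eventually allI)
    fix n
    have "real (Suc n) * s \<le> real_of_int \<lceil>real (Suc n) * s\<rceil>" by (rule le_of_int_ceiling)
    then show "s \<le> real_of_int \<lceil>real (Suc n) * s\<rceil> / real (Suc n)" by (simp add: field_simps)
  qed
  show "\<forall>\<^sub>F n in sequentially. real_of_int \<lceil>real (Suc n) * s\<rceil> / real (Suc n) \<le> s + 1 / real (Suc n)"
  proof (intro always_eventually allI)
    fix n
    have "real_of_int \<lceil>real (Suc n) * s\<rceil> \<le> real (Suc n) * s + 1"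
      using ceiling_correct[of "real (Suc n) * s"] by linarith
    then have "real_of_int \<lceil>real (Suc n) * s\<rceil> / real (Suc n) \<le> (real (Suc n) * s + 1) / real (Suc n)"
      by (intro divide_right_mono) auto
    also have "\<dots> = s + 1 / real (Suc n)" by (simp add: field_simps)
    finally show "real_of_int \<lceil>real (Suc n) * s\<rceil> / real (Suc n) \<le> s + 1 / real (Suc n)" .
  qed
  show "(\<lambda>n. s + 1 / real (Suc n)) \<longlonglongrightarrow> s"
    using tendsto_add[OF tendsto_const LIMSEQ_inverse_real_of_nat, of s] by (simp add: inverse_eq_divide)
qed simp

lemma ereal_affine_recursion_bound:
  fixes S :: "nat \<Rightarrow> ereal" and \<alpha> \<beta> U K :: real
  assumes \<alpha>: "0 < \<alpha>" "\<alpha> < 1" and "0 < U" "0 \<le> \<beta>" "0 \<le> K"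
    and S0: "S 0 \<le> ereal K"
    and step: "\<And>n. S (Suc n) \<le> ereal U + ereal \<alpha> * (S n + ereal \<beta>)"
  shows "S n < ereal (U / (1 - \<alpha>) + \<alpha> / (1 - \<alpha>) * \<beta> + K)"
proof -
  define L where "L = U / (1 - \<alpha>) + \<alpha> / (1 - \<alpha>) * \<beta> + K"
  have L_minus_K: "L - K = (U + \<alpha> * \<beta>) / (1 - \<alpha>)"
    by (simp add: L_def add_divide_distrib)
  then have fixed_point: "U + \<alpha> * \<beta> = (1 - \<alpha>) * (L - K)"
    using \<alpha> by simp
  have "S n < ereal L"
  proof (induction n)
    case 0
    have "0 < (U + \<alpha> * \<beta>) / (1 - \<alpha>)"
      using \<alpha> \<open>0 < U\<close> \<open>0 \<le> \<beta>\<close> by (intro divide_pos_pos add_pos_nonneg) auto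
    then have "K < L" using L_minus_K by simp
    with S0 show ?case by (simp add: order_le_less_trans)
  next
    case (Suc n)
    show ?case
    proof (cases "S n")
      case (real m)
      have "U + \<alpha> * (m + \<beta>) < U + \<alpha> * \<beta> + \<alpha> * L"
        using Suc real \<alpha> by (simp add: algebra_simps)
      also have "\<dots> = L - (1 - \<alpha>) * K" using fixed_point by (simp add: algebra_simps)
      also have "\<dots> \<le> L" using \<alpha> \<open>0 \<le> K\<close> by simp
      finally show ?thesis
        using step[of n] real by (simp add: order_le_less_trans)
    qed (use Suc step[of n] \<alpha> in auto)
  qed
  then show ?thesis by (simp add: L_def)
qed

locale jump_model =
  fixes r \<sigma> lam T K1 \<zeta> :: real and \<nu> :: "real measure" and M :: "'a measure"
    and W :: "real \<Rightarrow> 'a \<Rightarrow> real"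
  assumes r: "r > 0" and \<sigma>: "\<sigma> > 0" and lam: "lam > 0" and T: "T > 0" and K1: "K1 \<ge> 0"
    and \<zeta>: "\<zeta> \<in> {-1, 1}"
    and \<nu>_prob: "prob_space \<nu>" and \<nu>_sets: "sets \<nu> = sets borel" and \<nu>_nonpos: "emeasure \<nu> {..0} = 0"
    and \<nu>_integrable: "integrable \<nu> (\<lambda>y. y)" and BM: "std_BM M W"
begin

lemma M_prob: "prob_space M"
  using BM by (simp add: std_BM_def)

lemma W_measurable[measurable]: "W t \<in> borel_measurable M"
  using BM by (simp add: std_BM_def)

lemma W_0: "\<omega> \<in> space M \<Longrightarrow> W 0 \<omega> = 0"
  using BM by (simp add: std_BM_def)

lemma W_continuous: "\<omega> \<in> space M \<Longrightarrow> continuous_on {0..} (\<lambda>t. W t \<omega>)"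
  using BM by (simp add: std_BM_def)

lemma W_increment_distributed:
  "0 \<le> s \<Longrightarrow> s < t \<Longrightarrow>
    distributed M lborel (\<lambda>\<omega>. W t \<omega> - W s \<omega>) (\<lambda>x. ennreal (normal_density 0 (sqrt (t - s)) x))"
  using BM by (simp add: std_BM_def)

lemma \<nu>_AE_pos: "AE y in \<nu>. 0 < y"
proof (rule AE_I'[of "{..0}"])
  show "{..0} \<in> null_sets \<nu>" using \<nu>_nonpos \<nu>_sets by (auto intro: null_setsI)
qed auto

lemma xi_pos: "xi \<nu> > 0"
proof -
  interpret \<nu>: prob_space \<nu> by (rule \<nu>_prob)
  have nonneg: "AE y in \<nu>. 0 \<le> y" using \<nu>_AE_pos by (auto elim: eventually_mono)
  have "xi \<nu> \<noteq> 0"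
  proof
    assume "xi \<nu> = 0"
    then have "AE y in \<nu>. y = 0"
      using integral_nonneg_eq_0_iff_AE[OF \<nu>_integrable nonneg] by (simp add: xi_def)
    with \<nu>_AE_pos have "AE y in \<nu>. False" by eventually_elim auto
    then show False by simp
  qed
  moreover have "xi \<nu> \<ge> 0" unfolding xi_def using nonneg by (rule integral_nonneg_AE)
  ultimately show ?thesis by simp
qed

text \<open>
  W is only known to be continuous on [0, \<infinity>); freezing it at W 0 for negative times gives a
  version continuous on all of \<real>, hence jointly measurable in (s, \<omega>). Zsol only evaluates its
  Brownian argument at nonnegative times, so nothing is lost (see Zsol_Wext).
\<close>
definition Wext :: "real \<Rightarrow> 'a \<Rightarrow> real" where
  "Wext s \<omega> = W (max 0 s) \<omega>"

lemma Wext_continuous: "\<omega> \<in> space M \<Longrightarrow> continuous_on UNIV (\<lambda>s. Wext s \<omega>)"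
  unfolding Wext_def
  by (rule continuous_on_compose2[OF W_continuous]) (auto intro!: continuous_intros)

lemma Wext_measurable_pair: "(\<lambda>p. Wext (fst p) (snd p)) \<in> borel_measurable (borel \<Otimes>\<^sub>M M)"
proof (rule borel_measurable_LIMSEQ_real[where
      u="\<lambda>n p. Wext (real_of_int \<lceil>real (Suc n) * fst p\<rceil> / real (Suc n)) (snd p)"])
  fix n
  show "(\<lambda>p. Wext (real_of_int \<lceil>real (Suc n) * fst p\<rceil> / real (Suc n)) (snd p)) \<in> borel_measurable (borel \<Otimes>\<^sub>M M)"
    unfolding Wext_def
    by (rule measurable_compose_countable'[where I=UNIV and g="\<lambda>p. \<lceil>real (Suc n) * fst p\<rceil>"
          and f="\<lambda>i p. W (max 0 (real_of_int i / real (Suc n))) (snd p)"]) auto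
next
  fix p :: "real \<times> 'a" assume "p \<in> space (borel \<Otimes>\<^sub>M M)"
  then have "continuous_on UNIV (\<lambda>s. Wext s (snd p))"
    by (intro Wext_continuous) (auto simp: space_pair_measure)
  then show "(\<lambda>n. Wext (real_of_int \<lceil>real (Suc n) * fst p\<rceil> / real (Suc n)) (snd p)) \<longlonglongrightarrow> Wext (fst p) (snd p)"
    by (rule continuous_on_tendsto_compose[OF _ LIMSEQ_ceiling_grid]) auto
qed

lemma Wext_measurable[measurable (raw)]:
  "f \<in> borel_measurable N \<Longrightarrow> g \<in> measurable N M \<Longrightarrow> (\<lambda>x. Wext (f x) (g x)) \<in> borel_measurable N"
  using measurable_compose[OF measurable_Pair Wext_measurable_pair] by simp

lemma nn_integral_exp_Wext:
  assumes "0 \<le> s"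
  shows "(\<integral>\<^sup>+\<omega>. ennreal (exp (a * Wext s \<omega>)) \<partial>M) = ennreal (exp (a\<^sup>2 * s / 2))"
proof (cases "s = 0")
  case True
  interpret prob_space M by (rule M_prob)
  have "(\<integral>\<^sup>+\<omega>. ennreal (exp (a * Wext s \<omega>)) \<partial>M) = (\<integral>\<^sup>+\<omega>. 1 \<partial>M)"
    by (intro nn_integral_cong) (simp add: Wext_def True W_0)
  then show ?thesis using True by (simp add: emeasure_space_1)
next
  case False
  with assms have s: "0 < s" by simp
  have "(\<integral>\<^sup>+\<omega>. ennreal (exp (a * Wext s \<omega>)) \<partial>M) = (\<integral>\<^sup>+\<omega>. ennreal (exp (a * (W s \<omega> - W 0 \<omega>))) \<partial>M)"
    by (intro nn_integral_cong) (simp add: Wext_def W_0 assms)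
  also have "\<dots> = (\<integral>\<^sup>+x. ennreal (normal_density 0 (sqrt (s - 0)) x) * ennreal (exp (a * x)) \<partial>lborel)"
    by (rule distributed_nn_integral[OF W_increment_distributed[OF order_refl s], symmetric]) simp
  finally show ?thesis using nn_integral_normal_density_exp[of "sqrt s" a] s by simp
qed

abbreviation "mu \<equiv> muc lam \<nu>"
abbreviation "\<Phi> \<equiv> Phi mu \<sigma> Wext"

lemma \<Phi>_pos: "\<Phi> s \<omega> > 0"
  by (simp add: Phi_def)

lemma \<Phi>_nonneg[simp]: "\<Phi> s \<omega> \<ge> 0"
  by (simp add: Phi_def)

lemma \<Phi>_measurable[measurable (raw)]:
  assumes [measurable]: "f \<in> borel_measurable N" "g \<in> measurable N M"
  shows "(\<lambda>x. \<Phi> (f x) (g x)) \<in> borel_measurable N"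
  unfolding Phi_def by measurable

lemma \<Phi>_continuous: "\<omega> \<in> space M \<Longrightarrow> continuous_on A (\<lambda>s. \<Phi> s \<omega>)"
  unfolding Phi_def
  by (intro continuous_intros continuous_on_subset[OF Wext_continuous]) auto

lemma nn_integral_\<Phi>:
  assumes "0 \<le> s"
  shows "(\<integral>\<^sup>+\<omega>. ennreal (\<Phi> s \<omega>) \<partial>M) = ennreal (exp (mu * s))"
proof -
  have "(\<integral>\<^sup>+\<omega>. ennreal (\<Phi> s \<omega>) \<partial>M)
      = (\<integral>\<^sup>+\<omega>. ennreal (exp ((mu - \<sigma>\<^sup>2 / 2) * s)) * ennreal (exp ((- \<sigma>) * Wext s \<omega>)) \<partial>M)"
    by (intro nn_integral_cong) (simp add: Phi_def ennreal_mult[symmetric] mult_exp_exp)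
  also have "\<dots> = ennreal (exp ((mu - \<sigma>\<^sup>2 / 2) * s)) * (\<integral>\<^sup>+\<omega>. ennreal (exp ((- \<sigma>) * Wext s \<omega>)) \<partial>M)"
    by (rule nn_integral_cmult) measurable
  also have "\<dots> = ennreal (exp ((mu - \<sigma>\<^sup>2 / 2) * s)) * ennreal (exp ((- \<sigma>)\<^sup>2 * s / 2))"
    by (simp only: nn_integral_exp_Wext[OF assms])
  also have "\<dots> = ennreal (exp (mu * s))"
    by (simp add: ennreal_mult[symmetric] exp_add[symmetric] field_simps power2_eq_square)
  finally show ?thesis .
qed

lemma Zsol_measurable[measurable (raw)]:
  assumes [measurable]: "t \<in> borel_measurable N" "z \<in> borel_measurable N" "s \<in> borel_measurable N"
    "w \<in> measurable N M"
  shows "(\<lambda>x. Zsol r \<sigma> lam T \<nu> Wext (t x) (z x) (s x) (w x)) \<in> borel_measurable N"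
proof -
  have "(\<lambda>p. dqf r T (t (fst p) + snd p) / \<Phi> (snd p) (w (fst p))) \<in> borel_measurable (N \<Otimes>\<^sub>M borel)"
    unfolding dqf_def by measurable
  then have [measurable]: "(\<lambda>x. LINT u:{0..s x}|lborel. dqf r T (t x + u) / \<Phi> u (w x)) \<in> borel_measurable N"
    by (rule borel_measurable_set_integral_atLeastAtMost) measurable
  show ?thesis unfolding Zsol_def qf_def by measurable
qed

lemma Zsol_diff: "Zsol r \<sigma> lam T \<nu> Wext t z s \<omega> - Zsol r \<sigma> lam T \<nu> Wext t z' s \<omega> = \<Phi> s \<omega> * (z - z')"
  unfolding Zsol_def by (simp add: algebra_simps)

lemma Zsol_Wext: "0 \<le> s \<Longrightarrow> Zsol r \<sigma> lam T \<nu> W t z s \<omega> = Zsol r \<sigma> lam T \<nu> Wext t z s \<omega>"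
proof -
  have \<Phi>_Wext: "0 \<le> u \<Longrightarrow> Phi mu \<sigma> W u \<omega> = \<Phi> u \<omega>" for u
    by (simp add: Phi_def Wext_def)
  have "(LINT u:{0..s}|lborel. dqf r T (t + u) / Phi mu \<sigma> W u \<omega>) = (LINT u:{0..s}|lborel. dqf r T (t + u) / \<Phi> u \<omega>)"
    by (rule set_lebesgue_integral_cong) (auto simp: \<Phi>_Wext)
  then show "0 \<le> s \<Longrightarrow> ?thesis" unfolding Zsol_def by (simp add: \<Phi>_Wext)
qed

lemma Pop_measurable:
  assumes g: "case_prod g \<in> borel_measurable borel"
    and a: "a \<in> borel_measurable N" and b: "b \<in> borel_measurable N"
  shows "(\<lambda>x. Pop r T \<nu> g (a x) (b x)) \<in> borel_measurable N"
proof -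
  note [measurable (raw)] = borel_measurable_case_prod_compose[OF g]
  interpret \<nu>: prob_space \<nu> by (rule \<nu>_prob)
  have "(\<lambda>p. g (fst (fst p) / snd p + qf r T (snd (fst p)) * (snd p - 1) / snd p) (snd (fst p)) * snd p)
      \<in> borel_measurable ((borel \<Otimes>\<^sub>M borel) \<Otimes>\<^sub>M \<nu>)"
    by (subst measurable_cong_sets[OF sets_pair_measure_cong[OF refl \<nu>_sets] refl])
      (unfold qf_def, measurable)
  then have "(\<lambda>p. Pop r T \<nu> g (fst p) (snd p)) \<in> borel_measurable (borel \<Otimes>\<^sub>M borel)"
    unfolding Pop_def by (intro \<nu>.borel_measurable_lebesgue_integral) (simp add: split_beta')
  from measurable_compose[OF measurable_Pair[OF a b] this] show ?thesis by simp
qed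

lemma Pop_nonneg:
  assumes "\<And>z t. g z t \<ge> 0"
  shows "Pop r T \<nu> g z t \<ge> 0"
  unfolding Pop_def using \<nu>_AE_pos
  by (intro integral_nonneg_AE) (auto elim!: eventually_mono intro!: mult_nonneg_nonneg assms)

lemma Pop_lipschitz:
  assumes g: "case_prod g \<in> borel_measurable borel"
    and g_lip: "\<And>z z' t. \<bar>g z t - g z' t\<bar> \<le> \<bar>z - z'\<bar>"
  shows "\<bar>Pop r T \<nu> g z t - Pop r T \<nu> g z' t\<bar> \<le> \<bar>z - z'\<bar>"
proof -
  note [measurable (raw)] = borel_measurable_case_prod_compose[OF g]
  interpret \<nu>: prob_space \<nu> by (rule \<nu>_prob)
  let ?jump = "\<lambda>z y. z / y + qf r T t * (y - 1) / y"
  have "\<bar>(\<integral>y. g (?jump z y) t * y \<partial>\<nu>) - (\<integral>y. g (?jump z' y) t * y \<partial>\<nu>)\<bar> \<le> (\<integral>y. 1 \<partial>\<nu>) * \<bar>z - z'\<bar>"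
  proof (rule integral_param_lipschitz)
    show "(\<lambda>y. g (?jump z y) t * y) \<in> borel_measurable \<nu>" for z
      by (subst measurable_cong_sets[OF \<nu>_sets refl]) (unfold qf_def, measurable)
    show "AE y in \<nu>. \<bar>g (?jump z y) t * y - g (?jump z' y) t * y\<bar> \<le> 1 * \<bar>z - z'\<bar>" for z z'
      using \<nu>_AE_pos
    proof eventually_elim
      case (elim y)
      have "\<bar>g (?jump z y) t * y - g (?jump z' y) t * y\<bar> = \<bar>g (?jump z y) t - g (?jump z' y) t\<bar> * y"
        using elim by (simp add: left_diff_distrib[symmetric] abs_mult)
      also have "\<dots> \<le> \<bar>?jump z y - ?jump z' y\<bar> * y"
        using elim by (intro mult_right_mono g_lip) auto
      also have "\<dots> = \<bar>z - z'\<bar>"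
        using elim by (simp add: diff_divide_distrib[symmetric] abs_div)
      finally show ?case by simp
    qed
  qed simp
  then show ?thesis unfolding Pop_def by (simp add: \<nu>.prob_space)
qed

definition J_integrand :: "(real \<Rightarrow> real \<Rightarrow> real) \<Rightarrow> real \<Rightarrow> real \<Rightarrow> 'a \<Rightarrow> real" where
  "J_integrand g z t \<omega> =
     exp (- lam * xi \<nu> * (T - t)) * max 0 (\<zeta> * (Zsol r \<sigma> lam T \<nu> Wext t z (T - t) \<omega> - K1))
     + (LINT s:{0..T - t}|lborel. exp (- lam * xi \<nu> * s) * lam * Pop r T \<nu> g (Zsol r \<sigma> lam T \<nu> Wext t z s \<omega>) (t + s))"

lemma Jop_Wext: "Jop r \<sigma> lam T K1 \<zeta> \<nu> M Wext g z t = (\<integral>\<omega>. J_integrand g z t \<omega> \<partial>M)"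
  unfolding Jop_def J_integrand_def ..

lemma J_integrand_measurable:
  assumes g: "case_prod g \<in> borel_measurable borel"
    and [measurable]: "z \<in> borel_measurable N" "t \<in> borel_measurable N" "w \<in> measurable N M"
  shows "(\<lambda>x. J_integrand g (z x) (t x) (w x)) \<in> borel_measurable N"
proof -
  note [measurable (raw)] = Pop_measurable[OF g]
  have "(\<lambda>p. exp (- lam * xi \<nu> * snd p) * lam
        * Pop r T \<nu> g (Zsol r \<sigma> lam T \<nu> Wext (t (fst p)) (z (fst p)) (snd p) (w (fst p))) (t (fst p) + snd p))
      \<in> borel_measurable (N \<Otimes>\<^sub>M borel)"
    by measurable
  then have [measurable]: "(\<lambda>x. LINT s:{0..T - t x}|lborel. exp (- lam * xi \<nu> * s) * lam
        * Pop r T \<nu> g (Zsol r \<sigma> lam T \<nu> Wext (t x) (z x) s (w x)) (t x + s)) \<in> borel_measurable N"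
    by (rule borel_measurable_set_integral_atLeastAtMost) measurable
  show ?thesis unfolding J_integrand_def by measurable
qed

lemma Jop_Wext_measurable:
  assumes g: "case_prod g \<in> borel_measurable borel"
  shows "case_prod (Jop r \<sigma> lam T K1 \<zeta> \<nu> M Wext g) \<in> borel_measurable borel"
proof -
  interpret prob_space M by (rule M_prob)
  have "(\<lambda>p. J_integrand g (fst (fst p)) (snd (fst p)) (snd p)) \<in> borel_measurable ((borel \<Otimes>\<^sub>M borel) \<Otimes>\<^sub>M M)"
    by (rule J_integrand_measurable[OF g]) measurable
  then have "(\<lambda>p. \<integral>\<omega>. J_integrand g (fst p) (snd p) \<omega> \<partial>M) \<in> borel_measurable (borel \<Otimes>\<^sub>M borel)"
    by (intro borel_measurable_lebesgue_integral) (simp add: split_beta')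
  then show ?thesis by (simp add: Jop_Wext split_beta' borel_prod)
qed

lemma Jop_Wext_nonneg:
  assumes "\<And>z t. g z t \<ge> 0"
  shows "Jop r \<sigma> lam T K1 \<zeta> \<nu> M Wext g z t \<ge> 0"
  unfolding Jop_Wext J_integrand_def set_lebesgue_integral_def
  using lam Pop_nonneg[OF assms]
  by (intro integral_nonneg_AE AE_I2 add_nonneg_nonneg mult_nonneg_nonneg integral_nonneg_AE)
    (auto simp: indicator_def)

definition lip_weight :: "real \<Rightarrow> 'a \<Rightarrow> real" where
  "lip_weight t \<omega> = exp (- lam * xi \<nu> * (T - t)) * \<Phi> (T - t) \<omega>
     + (LINT s:{0..T - t}|lborel. exp (- lam * xi \<nu> * s) * lam * \<Phi> s \<omega>)"

lemma set_integrable_running_weight: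
  "\<omega> \<in> space M \<Longrightarrow> set_integrable lborel {0..a} (\<lambda>s. exp (- lam * xi \<nu> * s) * lam * \<Phi> s \<omega>)"
  by (intro borel_integrable_atLeastAtMost' continuous_intros \<Phi>_continuous)

lemma running_term_lipschitz:
  assumes g: "case_prod g \<in> borel_measurable borel"
    and g_lip: "\<And>z z' t. \<bar>g z t - g z' t\<bar> \<le> \<bar>z - z'\<bar>"
  shows "\<bar>exp (- lam * xi \<nu> * s) * lam * Pop r T \<nu> g (Zsol r \<sigma> lam T \<nu> Wext t z s \<omega>) (t + s)
        - exp (- lam * xi \<nu> * s) * lam * Pop r T \<nu> g (Zsol r \<sigma> lam T \<nu> Wext t z' s \<omega>) (t + s)\<bar>
    \<le> exp (- lam * xi \<nu> * s) * lam * \<Phi> s \<omega> * \<bar>z - z'\<bar>"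
proof -
  have "\<bar>Pop r T \<nu> g (Zsol r \<sigma> lam T \<nu> Wext t z s \<omega>) (t + s) - Pop r T \<nu> g (Zsol r \<sigma> lam T \<nu> Wext t z' s \<omega>) (t + s)\<bar>
      \<le> \<bar>Zsol r \<sigma> lam T \<nu> Wext t z s \<omega> - Zsol r \<sigma> lam T \<nu> Wext t z' s \<omega>\<bar>"
    by (rule Pop_lipschitz[OF g g_lip])
  also have "\<dots> = \<Phi> s \<omega> * \<bar>z - z'\<bar>"
    using \<Phi>_pos[of s \<omega>] by (simp add: Zsol_diff abs_mult)
  finally show ?thesis
    using lam by (simp add: right_diff_distrib[symmetric] abs_mult mult_left_mono mult.assoc)
qed

lemma J_integrand_lipschitz:
  assumes g: "case_prod g \<in> borel_measurable borel"
    and g_lip: "\<And>z z' t. \<bar>g z t - g z' t\<bar> \<le> \<bar>z - z'\<bar>"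
    and \<omega>: "\<omega> \<in> space M"
  shows "\<bar>J_integrand g z t \<omega> - J_integrand g z' t \<omega>\<bar> \<le> lip_weight t \<omega> * \<bar>z - z'\<bar>"
proof -
  note [measurable (raw)] = Pop_measurable[OF g]
  have [measurable]: "(\<lambda>_. \<omega>) \<in> measurable borel M" using \<omega> by simp
  let ?e = "\<lambda>s. exp (- lam * xi \<nu> * s)"
  let ?run = "\<lambda>z s. ?e s * lam * Pop r T \<nu> g (Zsol r \<sigma> lam T \<nu> Wext t z s \<omega>) (t + s)"
  have terminal: "\<bar>?e (T - t) * max 0 (\<zeta> * (Zsol r \<sigma> lam T \<nu> Wext t z (T - t) \<omega> - K1))
       - ?e (T - t) * max 0 (\<zeta> * (Zsol r \<sigma> lam T \<nu> Wext t z' (T - t) \<omega> - K1))\<bar>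
      \<le> ?e (T - t) * \<Phi> (T - t) \<omega> * \<bar>z - z'\<bar>"
  proof -
    have "\<bar>max 0 (\<zeta> * (a - K1)) - max 0 (\<zeta> * (b - K1))\<bar> \<le> \<bar>a - b\<bar>" for a b
      using \<zeta> by (auto simp: max_def)
    then have "\<bar>max 0 (\<zeta> * (Zsol r \<sigma> lam T \<nu> Wext t z (T - t) \<omega> - K1))
        - max 0 (\<zeta> * (Zsol r \<sigma> lam T \<nu> Wext t z' (T - t) \<omega> - K1))\<bar> \<le> \<Phi> (T - t) \<omega> * \<bar>z - z'\<bar>"
      using \<Phi>_pos[of "T - t" \<omega>] by (metis Zsol_diff abs_mult abs_of_pos)
    then show ?thesis
      by (simp add: right_diff_distrib[symmetric] abs_mult mult_left_mono mult.assoc)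
  qed
  have running: "\<bar>(LINT s:{0..T - t}|lborel. ?run z s) - (LINT s:{0..T - t}|lborel. ?run z' s)\<bar>
      \<le> (LINT s:{0..T - t}|lborel. ?e s * lam * \<Phi> s \<omega>) * \<bar>z - z'\<bar>"
    unfolding set_lebesgue_integral_def
  proof (rule integral_param_lipschitz)
    show "(\<lambda>s. indicator {0..T - t} s *\<^sub>R ?run z s) \<in> borel_measurable lborel" for z
      by (subst measurable_cong_sets[OF sets_lborel refl]) measurable
    show "integrable lborel (\<lambda>s. indicator {0..T - t} s *\<^sub>R (?e s * lam * \<Phi> s \<omega>))"
      using set_integrable_running_weight[OF \<omega>] by (simp add: set_integrable_def)
    show "AE s in lborel. \<bar>indicator {0..T - t} s *\<^sub>R ?run z s - indicator {0..T - t} s *\<^sub>R ?run z' s\<bar>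
        \<le> indicator {0..T - t} s *\<^sub>R (?e s * lam * \<Phi> s \<omega>) * \<bar>z - z'\<bar>" for z z'
      using running_term_lipschitz[OF g g_lip] by (intro AE_I2) (simp add: indicator_def)
  qed
  have "lip_weight t \<omega> * \<bar>z - z'\<bar>
      = ?e (T - t) * \<Phi> (T - t) \<omega> * \<bar>z - z'\<bar> + (LINT s:{0..T - t}|lborel. ?e s * lam * \<Phi> s \<omega>) * \<bar>z - z'\<bar>"
    by (simp add: lip_weight_def distrib_right)
  then show ?thesis
    unfolding J_integrand_def using terminal running
    by (intro order_trans[OF abs_diff_triangle_ineq]) linarith
qed

lemma exp_discount_mu: "exp (- lam * xi \<nu> * s) * exp (mu * s) = exp (- lam * s)"
  by (simp add: muc_def mult_exp_exp algebra_simps)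

lemma nn_integral_terminal_weight:
  assumes "0 \<le> a"
  shows "(\<integral>\<^sup>+\<omega>. ennreal (exp (- lam * xi \<nu> * a) * \<Phi> a \<omega>) \<partial>M) = ennreal (exp (- lam * a))"
proof -
  have "(\<integral>\<^sup>+\<omega>. ennreal (exp (- lam * xi \<nu> * a) * \<Phi> a \<omega>) \<partial>M)
      = ennreal (exp (- lam * xi \<nu> * a)) * (\<integral>\<^sup>+\<omega>. ennreal (\<Phi> a \<omega>) \<partial>M)"
    by (subst nn_integral_cmult[symmetric]) (auto simp: ennreal_mult intro!: nn_integral_cong)
  then show ?thesis
    using exp_discount_mu[of a] by (simp add: nn_integral_\<Phi>[OF assms] ennreal_mult[symmetric])
qed

lemma nn_integral_running_weight:
  assumes a: "0 \<le> a"
  shows "(\<integral>\<^sup>+\<omega>. ennreal (LINT s:{0..a}|lborel. exp (- lam * xi \<nu> * s) * lam * \<Phi> s \<omega>) \<partial>M)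
    = ennreal (1 - exp (- lam * a))"
proof -
  interpret prob_space M by (rule M_prob)
  interpret pair_sigma_finite lborel M by unfold_locales
  let ?w = "\<lambda>s \<omega>. indicator {0..a} s * (exp (- lam * xi \<nu> * s) * lam * \<Phi> s \<omega>)"
  have "(\<integral>\<^sup>+\<omega>. ennreal (LINT s:{0..a}|lborel. exp (- lam * xi \<nu> * s) * lam * \<Phi> s \<omega>) \<partial>M)
      = (\<integral>\<^sup>+\<omega>. (\<integral>\<^sup>+s. ennreal (?w s \<omega>) \<partial>lborel) \<partial>M)"
    unfolding set_lebesgue_integral_def
    using set_integrable_running_weight lam \<Phi>_pos
    by (intro nn_integral_cong, subst nn_integral_eq_integral)
      (auto simp: set_integrable_def indicator_def less_imp_le)
  also have "\<dots> = (\<integral>\<^sup>+s. (\<integral>\<^sup>+\<omega>. ennreal (?w s \<omega>) \<partial>M) \<partial>lborel)"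
  proof (rule Fubini')
    show "(\<lambda>(s, \<omega>). ennreal (?w s \<omega>)) \<in> borel_measurable (lborel \<Otimes>\<^sub>M M)"
      by (subst measurable_cong_sets[OF sets_pair_measure_cong[OF sets_lborel refl] refl]) measurable
  qed
  also have "\<dots> = (\<integral>\<^sup>+s. ennreal (indicator {0..a} s * (lam * exp (- lam * s))) \<partial>lborel)"
  proof (intro nn_integral_cong)
    fix s :: real
    show "(\<integral>\<^sup>+\<omega>. ennreal (?w s \<omega>) \<partial>M) = ennreal (indicator {0..a} s * (lam * exp (- lam * s)))"
    proof (cases "s \<in> {0..a}")
      case True
      have "(\<integral>\<^sup>+\<omega>. ennreal (?w s \<omega>) \<partial>M) = ennreal (exp (- lam * xi \<nu> * s) * lam) * (\<integral>\<^sup>+\<omega>. ennreal (\<Phi> s \<omega>) \<partial>M)"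
        using True lam by (subst nn_integral_cmult[symmetric]) (auto simp: ennreal_mult intro!: nn_integral_cong)
      then show ?thesis
        using True lam exp_discount_mu[of s] by (simp add: nn_integral_\<Phi> ennreal_mult[symmetric] mult_ac)
    qed simp
  qed
  also have "\<dots> = ennreal (1 - exp (- lam * a))"
    using lam a by (intro nn_integral_exponential_density_atLeastAtMost) auto
  finally show ?thesis .
qed

lemma lip_weight_integrable_integral:
  assumes "t \<le> T"
  shows "integrable M (lip_weight t)" "integral\<^sup>L M (lip_weight t) = 1"
proof -
  define a where "a = T - t"
  have a: "0 \<le> a" using assms by (simp add: a_def)
  have [measurable]: "(\<lambda>\<omega>. LINT s:{0..a}|lborel. exp (- lam * xi \<nu> * s) * lam * \<Phi> s \<omega>) \<in> borel_measurable M"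
    by (rule borel_measurable_set_integral_atLeastAtMost) measurable
  have running_nonneg: "0 \<le> (LINT s:{0..a}|lborel. exp (- lam * xi \<nu> * s) * lam * \<Phi> s \<omega>)" for \<omega>
    unfolding set_lebesgue_integral_def using lam \<Phi>_pos
    by (intro integral_nonneg_AE AE_I2) (auto simp: indicator_def less_imp_le)
  have nonneg: "0 \<le> lip_weight t \<omega>" for \<omega>
    unfolding lip_weight_def a_def[symmetric] using running_nonneg[of \<omega>] \<Phi>_pos[of a \<omega>] by simp
  have "(\<integral>\<^sup>+\<omega>. ennreal (lip_weight t \<omega>) \<partial>M)
      = (\<integral>\<^sup>+\<omega>. ennreal (exp (- lam * xi \<nu> * a) * \<Phi> a \<omega>)
           + ennreal (LINT s:{0..a}|lborel. exp (- lam * xi \<nu> * s) * lam * \<Phi> s \<omega>) \<partial>M)"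
    unfolding lip_weight_def a_def[symmetric] using running_nonneg \<Phi>_pos
    by (intro nn_integral_cong) (simp add: ennreal_plus less_imp_le)
  also have "\<dots> = (\<integral>\<^sup>+\<omega>. ennreal (exp (- lam * xi \<nu> * a) * \<Phi> a \<omega>) \<partial>M)
      + (\<integral>\<^sup>+\<omega>. ennreal (LINT s:{0..a}|lborel. exp (- lam * xi \<nu> * s) * lam * \<Phi> s \<omega>) \<partial>M)"
    by (rule nn_integral_add) measurable
  also have "\<dots> = ennreal (exp (- lam * a)) + ennreal (1 - exp (- lam * a))"
    by (simp only: nn_integral_terminal_weight[OF a] nn_integral_running_weight[OF a])
  also have "\<dots> = 1"
    using a lam by (subst ennreal_plus[symmetric]) auto
  finally have "(\<integral>\<^sup>+\<omega>. ennreal (lip_weight t \<omega>) \<partial>M) = 1" .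
  moreover have "lip_weight t \<in> borel_measurable M"
    unfolding lip_weight_def a_def[symmetric] by measurable
  ultimately show "integrable M (lip_weight t)" "integral\<^sup>L M (lip_weight t) = 1"
    using nonneg by (auto intro: integrableI_nonneg simp: integral_eq_nn_integral)
qed

lemma Jop_Wext_lipschitz:
  assumes g: "case_prod g \<in> borel_measurable borel"
    and g_lip: "\<And>z z' t. \<bar>g z t - g z' t\<bar> \<le> \<bar>z - z'\<bar>"
    and "t \<le> T"
  shows "\<bar>Jop r \<sigma> lam T K1 \<zeta> \<nu> M Wext g z t - Jop r \<sigma> lam T K1 \<zeta> \<nu> M Wext g z' t\<bar> \<le> \<bar>z - z'\<bar>"
proof -
  have "\<bar>(\<integral>\<omega>. J_integrand g z t \<omega> \<partial>M) - (\<integral>\<omega>. J_integrand g z' t \<omega> \<partial>M)\<bar>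
      \<le> integral\<^sup>L M (lip_weight t) * \<bar>z - z'\<bar>"
  proof (rule integral_param_lipschitz)
    show "(\<lambda>\<omega>. J_integrand g z t \<omega>) \<in> borel_measurable M" for z
      by (rule J_integrand_measurable[OF g]) measurable
    show "AE \<omega> in M. \<bar>J_integrand g z t \<omega> - J_integrand g z' t \<omega>\<bar> \<le> lip_weight t \<omega> * \<bar>z - z'\<bar>" for z z'
      using J_integrand_lipschitz[OF g g_lip] by (intro AE_I2)
  qed (rule lip_weight_integrable_integral[OF assms(3)])
  then show ?thesis by (simp add: Jop_Wext lip_weight_integrable_integral[OF assms(3)])
qed

definition admissible :: "(real \<Rightarrow> real \<Rightarrow> real) \<Rightarrow> bool" where
  "admissible f \<longleftrightarrow> (\<lambda>(z, t). f z t) \<in> borel_measurable (restrict_space borel (UNIV \<times> {0..T}))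
     \<and> (\<forall>z. \<forall>t\<in>{0..T}. f z t \<ge> 0) \<and> (\<forall>z z'. \<forall>t\<in>{0..T}. \<bar>f z t - f z' t\<bar> \<le> \<bar>z - z'\<bar>)"

text \<open>Admissibility only constrains times in [0, T]; clamping the time extends f to all of \<real> \<times> \<real>.\<close>
definition clamp_time :: "(real \<Rightarrow> real \<Rightarrow> real) \<Rightarrow> real \<Rightarrow> real \<Rightarrow> real" where
  "clamp_time f z t = f z (min T (max 0 t))"

lemma clamp_time_in: "min T (max 0 t) \<in> {0..T}"
  using T by auto

lemma admissible_clamp_time:
  assumes "admissible f"
  shows "case_prod (clamp_time f) \<in> borel_measurable borel"
    and "\<And>z t. clamp_time f z t \<ge> 0"
    and "\<And>z z' t. \<bar>clamp_time f z t - clamp_time f z' t\<bar> \<le> \<bar>z - z'\<bar>"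
proof -
  have "(\<lambda>p::real \<times> real. (fst p, min T (max 0 (snd p)))) \<in> borel \<rightarrow>\<^sub>M restrict_space borel (UNIV \<times> {0..T})"
    by (intro measurable_restrict_space2 borel_measurable_continuous_onI continuous_intros)
      (use T in auto)
  moreover have "(\<lambda>(z, t). f z t) \<in> borel_measurable (restrict_space borel (UNIV \<times> {0..T}))"
    using assms by (simp add: admissible_def)
  ultimately have "(\<lambda>p. (\<lambda>(z, t). f z t) (fst p, min T (max 0 (snd p)))) \<in> borel_measurable borel"
    by (rule measurable_compose)
  then show "case_prod (clamp_time f) \<in> borel_measurable borel"
    by (simp add: clamp_time_def split_beta')
  show "\<And>z t. clamp_time f z t \<ge> 0" "\<And>z z' t. \<bar>clamp_time f z t - clamp_time f z' t\<bar> \<le> \<bar>z - z'\<bar>"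
    using assms clamp_time_in by (auto simp: admissible_def clamp_time_def)
qed

lemma Jop_eq_clamp_time:
  assumes t: "t \<in> {0..T}"
  shows "Jop r \<sigma> lam T K1 \<zeta> \<nu> M W f z t = Jop r \<sigma> lam T K1 \<zeta> \<nu> M Wext (clamp_time f) z t"
proof -
  have "(LINT s:{0..T - t}|lborel. exp (- lam * xi \<nu> * s) * lam * Pop r T \<nu> f (Zsol r \<sigma> lam T \<nu> W t z s \<omega>) (t + s))
      = (LINT s:{0..T - t}|lborel. exp (- lam * xi \<nu> * s) * lam
           * Pop r T \<nu> (clamp_time f) (Zsol r \<sigma> lam T \<nu> Wext t z s \<omega>) (t + s))" for \<omega>
  proof (rule set_lebesgue_integral_cong)
    show "\<forall>s. s \<in> {0..T - t} \<longrightarrow>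
        exp (- lam * xi \<nu> * s) * lam * Pop r T \<nu> f (Zsol r \<sigma> lam T \<nu> W t z s \<omega>) (t + s) =
        exp (- lam * xi \<nu> * s) * lam * Pop r T \<nu> (clamp_time f) (Zsol r \<sigma> lam T \<nu> Wext t z s \<omega>) (t + s)"
      using t by (auto simp: Zsol_Wext Pop_def clamp_time_def)
  qed simp
  moreover have "Zsol r \<sigma> lam T \<nu> W t z (T - t) \<omega> = Zsol r \<sigma> lam T \<nu> Wext t z (T - t) \<omega>" for \<omega>
    using t by (intro Zsol_Wext) simp
  ultimately show ?thesis unfolding Jop_def by simp
qed

lemma admissible_Jop:
  assumes f: "admissible f"
  shows "admissible (Jop r \<sigma> lam T K1 \<zeta> \<nu> M W f)"
proof -
  note clamp = admissible_clamp_time[OF f]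
  have "case_prod (Jop r \<sigma> lam T K1 \<zeta> \<nu> M Wext (clamp_time f))
      \<in> borel_measurable (restrict_space borel (UNIV \<times> {0..T}))"
    by (rule measurable_restrict_space1[OF Jop_Wext_measurable[OF clamp(1)]])
  then have "(\<lambda>(z, t). Jop r \<sigma> lam T K1 \<zeta> \<nu> M W f z t) \<in> borel_measurable (restrict_space borel (UNIV \<times> {0..T}))"
    by (rule measurable_cong[THEN iffD1, rotated]) (auto simp: space_restrict_space Jop_eq_clamp_time)
  moreover have "\<forall>z. \<forall>t\<in>{0..T}. Jop r \<sigma> lam T K1 \<zeta> \<nu> M W f z t \<ge> 0"
    using Jop_Wext_nonneg[OF clamp(2)] by (simp add: Jop_eq_clamp_time)
  moreover have "\<forall>z z'. \<forall>t\<in>{0..T}.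
      \<bar>Jop r \<sigma> lam T K1 \<zeta> \<nu> M W f z t - Jop r \<sigma> lam T K1 \<zeta> \<nu> M W f z' t\<bar> \<le> \<bar>z - z'\<bar>"
    using Jop_Wext_lipschitz[OF clamp(1) clamp(3)] by (simp add: Jop_eq_clamp_time)
  ultimately show ?thesis unfolding admissible_def by blast
qed

lemma vseq_Suc:
  "vseq r \<sigma> lam T K1 \<zeta> \<nu> M W (Suc n) = Jop r \<sigma> lam T K1 \<zeta> \<nu> M W (vseq r \<sigma> lam T K1 \<zeta> \<nu> M W n)"
  by (simp add: vseq_def)

lemma admissible_vseq: "admissible (vseq r \<sigma> lam T K1 \<zeta> \<nu> M W n)"
proof (induction n)
  case 0
  have "(\<lambda>(z, t). max 0 (\<zeta> * (z - K1))) \<in> borel_measurable (restrict_space borel (UNIV \<times> {0..T}))"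
    by (intro measurable_restrict_space1) (simp add: split_beta' borel_measurable_continuous_onI continuous_intros)
  then show ?case using \<zeta> by (auto simp: admissible_def vseq_def max_def)
next
  case (Suc n)
  then show ?case unfolding vseq_Suc by (rule admissible_Jop)
qed

end

theorem lemma4p7:
  fixes r \<sigma> lam T K1 \<zeta> U B :: real
    and \<nu> :: "real measure"
    and M :: "'a measure"
    and W :: "real \<Rightarrow> 'a \<Rightarrow> real"
  assumes "r > 0" "\<sigma> > 0" "lam > 0" "T > 0" "K1 \<ge> 0" "\<zeta> \<in> {-1, 1}"
    and "prob_space \<nu>" "sets \<nu> = sets borel" "emeasure \<nu> {..0} = 0"
    and "integrable \<nu> (\<lambda>y. y)"
    and "std_BM M W"
    and "U > 0" "B > 0"
    and hyp: "\<And>f :: real \<Rightarrow> real \<Rightarrow> real.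
        (\<lambda>(z, t). f z t) \<in> borel_measurable (restrict_space borel (UNIV \<times> {0..T})) \<Longrightarrow>
        (\<forall>z. \<forall>t\<in>{0..T}. f z t \<ge> 0) \<Longrightarrow>
        (\<forall>z z'. \<forall>t\<in>{0..T}. \<bar>f z t - f z' t\<bar> \<le> \<bar>z - z'\<bar>) \<Longrightarrow>
        (SUP t\<in>{0..T}. ereal (Jop r \<sigma> lam T K1 \<zeta> \<nu> M W f 0 t))
          \<le> ereal U + ereal (1 - exp (- lam * xi \<nu> * T))
               * ((SUP t\<in>{0..T}. ereal (f 0 t)) + ereal (B / xi \<nu>))"
  shows "\<forall>n. (SUP t\<in>{0..T}. ereal (vseq r \<sigma> lam T K1 \<zeta> \<nu> M W n 0 t))
           < ereal (U / (1 - (1 - exp (- lam * xi \<nu> * T)))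
                    + (1 - exp (- lam * xi \<nu> * T)) / (1 - (1 - exp (- lam * xi \<nu> * T))) * (B / xi \<nu>)
                    + K1)"
proof
  interpret jump_model r \<sigma> lam T K1 \<zeta> \<nu> M W
    using assms(1-11) by (simp add: jump_model_def)
  fix n
  let ?M = "\<lambda>n. SUP t\<in>{0..T}. ereal (vseq r \<sigma> lam T K1 \<zeta> \<nu> M W n 0 t)"
  show "?M n < ereal (U / (1 - (1 - exp (- lam * xi \<nu> * T)))
      + (1 - exp (- lam * xi \<nu> * T)) / (1 - (1 - exp (- lam * xi \<nu> * T))) * (B / xi \<nu>) + K1)"
  proof (rule ereal_affine_recursion_bound)
    show "0 < 1 - exp (- lam * xi \<nu> * T)" "1 - exp (- lam * xi \<nu> * T) < 1"
      using xi_pos \<open>lam > 0\<close> \<open>T > 0\<close> by simp_all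
    show "0 \<le> B / xi \<nu>" using xi_pos \<open>B > 0\<close> by simp
    show "?M 0 \<le> ereal K1"
      using \<open>\<zeta> \<in> {-1, 1}\<close> \<open>K1 \<ge> 0\<close> by (intro SUP_least) (auto simp: vseq_def)
    show "?M (Suc n) \<le> ereal U + ereal (1 - exp (- lam * xi \<nu> * T)) * (?M n + ereal (B / xi \<nu>))" for n
      using admissible_vseq[of n] unfolding vseq_Suc admissible_def by (intro hyp) auto
  qed fact+
qed

end
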